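(* Let $\theta\geq\sigma>0$, $n\geq 1$, $M\ge 1$, $\Upsilon>0$. Then $$\epsilon_{\mathrm{m}}^{\star}(n,M,\Upsilon)\;\geq\;\alpha_{1/M}\bigl(\varphi^n_{\sqrt{\Upsilon},\sigma},\varphi^n_{0,\theta}\bigr).$$
   Context: $\varphi_{\mu,\sigma}(y)=\frac{1}{\sqrt{2\pi}\sigma}e^{-(y-\mu)^2/(2\sigma^2)}$ and $\varphi^n_{\mu,\sigma}$ denotes the distribution on $\mathbb{R}^n$ of $n$ i.i.d. $\mathcal{N}(\mu,\sigma^2)$ coordinates. For distributions $A,B$ on a common space $\mathcal{Z}$ and $\beta\in[0,1]$, $\alpha_\beta(A,B)=\inf\{1-\mathbb{E}_A[T(Z)]:\ T:\mathcal{Z}\to[0,1]\text{ measurable},\ \mathbb{E}_B[T(Z)]\le\beta\}$. AWGN channel with noise variance $\sigma^2$: input $\mathbf{x}\in\mathbb{R}^n$, output density $\prod_i\varphi_{x_i,\sigma}(y_i)$. For a codebook $\mathcal{C}=\{\mathbf{c}_1,\dots,\mathbf{c}_M\}\subset\mathbb{R}^n$ with uniformly distributed message and maximum-likelihood decoding, $P_e(\mathcal{C})$ is the average error probability. $\epsilon_{\mathrm{m}}^{\star}(n,M,\Upsilon)=\inf\{P_e(\mathcal{C}):\|\mathbf{c}_i\|^2\le n\Upsilon\ \forall i\}$. *)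

theory Defs
  imports "HOL-Probability.Probability"
begin

definition gauss_vec_density :: "real \<Rightarrow> real \<Rightarrow> real ^ 'n \<Rightarrow> real" where
  "gauss_vec_density \<mu> \<sigma> y = (\<Prod>i\<in>UNIV. normal_density \<mu> \<sigma> (y $ i))"

definition gauss_vec :: "real \<Rightarrow> real \<Rightarrow> (real ^ 'n) measure" where
  "gauss_vec \<mu> \<sigma> = density lborel (\<lambda>y. ennreal (gauss_vec_density \<mu> \<sigma> y))"

definition alpha_beta :: "real \<Rightarrow> 'a measure \<Rightarrow> 'a measure \<Rightarrow> real" where
  "alpha_beta \<beta> A B = Inf {1 - integral\<^sup>L A T | T.
      T \<in> borel_measurable A \<and> sets B = sets A \<and> (\<forall>z \<in> space A. 0 \<le> T z \<and> T z \<le> 1)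
      \<and> integral\<^sup>L B T \<le> \<beta>}"

definition awgn_lik :: "real \<Rightarrow> real ^ 'n \<Rightarrow> real ^ 'n \<Rightarrow> real" where
  "awgn_lik \<sigma> x y = (\<Prod>i\<in>UNIV. normal_density (x $ i) \<sigma> (y $ i))"

definition ml_decode :: "real \<Rightarrow> nat \<Rightarrow> (nat \<Rightarrow> real ^ 'n) \<Rightarrow> real ^ 'n \<Rightarrow> nat" where
  "ml_decode \<sigma> M c y = (LEAST i. i < M \<and> (\<forall>j<M. awgn_lik \<sigma> (c j) y \<le> awgn_lik \<sigma> (c i) y))"

definition Pe :: "real \<Rightarrow> nat \<Rightarrow> (nat \<Rightarrow> real ^ 'n) \<Rightarrow> real" where
  "Pe \<sigma> M c = (1 / real M) * (\<Sum>i<M.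
      measure (density lborel (\<lambda>y. ennreal (awgn_lik \<sigma> (c i) y))) {y. ml_decode \<sigma> M c y \<noteq> i})"

definition eps_m_star :: "'n::finite itself \<Rightarrow> real \<Rightarrow> nat \<Rightarrow> real \<Rightarrow> real" where
  "eps_m_star _ \<sigma> M \<Upsilon> = Inf {Pe \<sigma> M (c :: nat \<Rightarrow> real ^ 'n) | c.
      \<forall>i<M. (norm (c i))\<^sup>2 \<le> real CARD('n) * \<Upsilon>}"

end

theory Submission
  imports Defs "HOL-Analysis.Analysis"
begin

text \<open>
  Put \<open>a = (\<surd>\<Upsilon>, \<dots>, \<surd>\<Upsilon>)\<close>, so that every admissible codeword satisfies \<open>\<parallel>c\<^sub>i\<parallel> \<le> \<parallel>a\<parallel>\<close>.
  Let \<open>R\<^sub>i\<close> be the reflection in the perpendicular bisector of \<open>a\<close> and \<open>c\<^sub>i\<close>: it preserves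
  Lebesgue measure and exchanges the half-spaces closer to \<open>a\<close> and closer to \<open>c\<^sub>i\<close>.
  Polarize the indicator of the \<open>i\<close>-th ML decision region along \<open>R\<^sub>i\<close> (on each pair
  \<open>{z, R\<^sub>i z}\<close> put the larger value on the side of \<open>a\<close>) and average over \<open>i\<close>; this gives a
  test \<open>T\<close> with values in \<open>[0,1]\<close>. The density of \<open>N(a, \<sigma>\<^sup>2 I)\<close> is larger on the side
  of \<open>a\<close>, so \<open>E\<^sub>A T\<close> is at least the mean probability of correct decoding, \<open>1 - P\<^sub>e\<close>.
  Because \<open>\<parallel>c\<^sub>i\<parallel> \<le> \<parallel>a\<parallel>\<close>, \<open>R\<^sub>i\<close> moves points on the side of \<open>a\<close> closer to the origin, so the
  density of \<open>N(0, \<theta>\<^sup>2 I)\<close> is smaller there and \<open>E\<^sub>B T \<le> E\<^sub>B (\<Sum>\<^sub>i 1[D\<^sub>i]) / M \<le> 1/M\<close>.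
  Hence \<open>T\<close> is admissible for \<open>\<alpha>(1/M)\<close> and \<open>\<alpha>(1/M) \<le> 1 - E\<^sub>A T \<le> P\<^sub>e\<close>.
\<close>

section \<open>Lebesgue measure is invariant under orthogonal maps\<close>

text \<open>
  The library proves this only for index types of class \<open>wellorder\<close>; \<open>'a idx\<close> is a
  wellordered copy of a finite type through which the result is transferred.
\<close>

typedef ('a::finite) idx = "{..<CARD('a)}"
  by (rule exI[of _ 0]) (simp add: finite_UNIV_card_ge_0)

instance idx :: (finite) finite
proof
  have "(UNIV :: 'a idx set) = Abs_idx ` {..<CARD('a)}"
    by (metis Rep_idx_inverse Rep_idx image_eqI UNIV_eq_I)
  then show "finite (UNIV :: 'a idx set)"
    by (metis finite_imageI finite_lessThan)
qed

instantiation idx :: (finite) linorder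
begin
definition less_eq_idx :: "'a idx \<Rightarrow> 'a idx \<Rightarrow> bool" where
  "less_eq_idx x y \<longleftrightarrow> Rep_idx x \<le> Rep_idx y"
definition less_idx :: "'a idx \<Rightarrow> 'a idx \<Rightarrow> bool" where
  "less_idx x y \<longleftrightarrow> Rep_idx x < Rep_idx y"
instance
  by standard (auto simp: less_eq_idx_def less_idx_def Rep_idx_inject)
end

instance idx :: (finite) wellorder
proof
  fix P :: "'a idx \<Rightarrow> bool" and x
  assume step: "\<And>x. (\<And>y. y < x \<Longrightarrow> P y) \<Longrightarrow> P x"
  have "\<forall>x. Rep_idx x = n \<longrightarrow> P x" for n
    by (induction n rule: less_induct) (metis step less_idx_def)
  then show "P x" by blast
qed

lemma card_idx: "CARD('a::finite idx) = CARD('a)"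
  using type_definition.card[OF type_definition_idx] by simp

lemma inner_prod_Basis_cart: "(\<Prod>b\<in>Basis. x \<bullet> b) = (\<Prod>i\<in>UNIV. x $ i)"
  for x :: "real^'n"
  by (simp add: Basis_vec_def cart_eq_inner_axis axis_eq_axis prod.UNION_disjoint)

lemma distr_lborel_permute_coordinates:
  fixes e :: "'a::finite \<Rightarrow> 'b::finite"
  assumes e: "bij e"
  shows "distr lborel borel (\<lambda>x::real^'a. \<chi> j. x $ inv e j) = (lborel :: (real^'b) measure)"
proof (rule lborel_eqI[symmetric])
  let ?P = "\<lambda>x::real^'a. (\<chi> j. x $ inv e j) :: real^'b"
  have meas: "?P \<in> borel_measurable borel"
    by (intro borel_measurable_continuous_onI continuous_intros)
  fix l u :: "real^'b"
  assume lu: "\<And>b. b \<in> Basis \<Longrightarrow> l \<bullet> b \<le> u \<bullet> b"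
  have le: "l $ j \<le> u $ j" for j
    using lu[of "axis j 1"] by (simp add: cart_eq_inner_axis)
  have inv_e: "inv e (e i) = i" "e (inv e j) = j" for i j
    using e by (auto simp: bij_def inv_f_f surj_f_inv_f)
  have "?P -` box l u = box (\<chi> i. l $ e i) (\<chi> i. u $ e i)"
    by (auto simp: mem_box_cart) (metis inv_e)+
  moreover have "b \<in> Basis \<Longrightarrow> (\<chi> i. l $ e i) \<bullet> b \<le> (\<chi> i. u $ e i) \<bullet> b" for b :: "real^'a"
    using le by (auto simp: Basis_vec_def inner_axis)
  ultimately have "emeasure (distr lborel borel ?P) (box l u) = (\<Prod>i\<in>UNIV. u $ e i - l $ e i)"
    using meas by (simp add: emeasure_distr inner_prod_Basis_cart)
  also have "\<dots> = (\<Prod>j\<in>UNIV. u $ j - l $ j)"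
    using prod.reindex_bij_betw[of e UNIV UNIV "\<lambda>j. u $ j - l $ j"] e by (simp add: bij_betw_def bij_def)
  finally show "emeasure (distr lborel borel ?P) (box l u) = (\<Prod>b\<in>Basis. (u - l) \<bullet> b)"
    by (simp add: inner_prod_Basis_cart)
qed simp

lemma borel_measurable_linear:
  fixes f :: "'a::euclidean_space \<Rightarrow> 'b::euclidean_space"
  shows "linear f \<Longrightarrow> f \<in> borel_measurable borel"
  by (intro borel_measurable_continuous_onI linear_continuous_on linear_conv_bounded_linear[THEN iffD1])

lemma distr_lborel_orthogonal_transformation_wellorder:
  fixes G :: "real^'n::{finite,wellorder} \<Rightarrow> real^'n::_"
  assumes G: "orthogonal_transformation G"
  shows "distr lborel borel G = lborel"
proof (rule lborel_eqI[symmetric])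
  have meas: "G \<in> borel_measurable borel"
    using G by (intro borel_measurable_linear orthogonal_transformation_linear)
  fix l u :: "real^'n::_"
  assume "\<And>b. b \<in> Basis \<Longrightarrow> l \<bullet> b \<le> u \<bullet> b"
  then have "emeasure lborel (box l u) = (\<Prod>b\<in>Basis. (u - l) \<bullet> b)"
    by simp
  moreover have "emeasure (distr lborel borel G) (box l u) = emeasure lborel (box l u)"
  proof -
    have H: "orthogonal_transformation (inv G)"
      using G by (rule orthogonal_transformation_inv)
    have pre: "G -` box l u = inv G ` box l u"
      using G by (simp add: bij_vimage_eq_inv_image orthogonal_transformation_bij)
    have "emeasure (distr lborel borel G) (box l u) = emeasure lebesgue (inv G ` box l u)"
      using meas measurable_sets[OF meas, of "box l u"]
      by (simp add: emeasure_distr emeasure_completion pre[symmetric])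
    also have "\<dots> = emeasure lebesgue (box l u)"
      using measurable_orthogonal_image[OF H lmeasurable_box]
        measure_orthogonal_image[OF H lmeasurable_box] lmeasurable_box by (simp add: emeasure_eq_measure2)
    finally show ?thesis
      by (simp add: emeasure_completion)
  qed
  ultimately show "emeasure (distr lborel borel G) (box l u) = (\<Prod>b\<in>Basis. (u - l) \<bullet> b)"
    by simp
qed simp

lemma distr_lborel_orthogonal_transformation:
  fixes G :: "real^'n::finite \<Rightarrow> real^'n"
  assumes G: "orthogonal_transformation G"
  shows "distr lborel borel G = lborel"
proof -
  obtain e :: "'n \<Rightarrow> 'n idx" where e: "bij e"
    using finite_same_card_bij[of "UNIV :: 'n set" "UNIV :: 'n idx set"] card_idx[where 'a='n] by auto
  define \<Phi> where "\<Phi> x = ((\<chi> j. x $ inv e j) :: real^'n idx)" for x :: "real^'n"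
  define \<Psi> where "\<Psi> y = ((\<chi> i. y $ e i) :: real^'n)" for y :: "real^'n idx"
  have inv_e: "inv e (e i) = i" "e (inv e j) = j" for i j
    using e by (auto simp: bij_def inv_f_f surj_f_inv_f)
  have \<Phi>\<Psi>: "\<Phi> (\<Psi> y) = y" "\<Psi> (\<Phi> x) = x" for x y
    by (simp_all add: \<Phi>_def \<Psi>_def vec_eq_iff inv_e)
  have lin: "linear \<Phi>" "linear \<Psi>"
    by (rule linearI; simp add: \<Phi>_def \<Psi>_def vec_eq_iff)+
  have inner_\<Phi>: "\<Phi> v \<bullet> \<Phi> w = v \<bullet> w" for v w
    using sum.reindex_bij_betw[of "inv e" UNIV UNIV "\<lambda>i. v $ i * w $ i"] bij_imp_bij_inv[OF e]
    by (simp add: \<Phi>_def inner_vec_def bij_betw_def bij_def)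
  have inner_\<Psi>: "\<Psi> v \<bullet> \<Psi> w = v \<bullet> w" for v w
    by (metis \<Phi>\<Psi>(1) inner_\<Phi>)
  have "distr lborel borel \<Phi> = lborel"
    unfolding \<Phi>_def[abs_def] by (rule distr_lborel_permute_coordinates[OF e])
  moreover have "distr lborel borel \<Psi> = lborel"
    using distr_lborel_permute_coordinates[OF bij_imp_bij_inv[OF e]]
    by (simp add: \<Psi>_def[abs_def] inv_inv_eq[OF e])
  moreover have "distr lborel borel (\<Phi> \<circ> G \<circ> \<Psi>) = lborel"
    using G lin by (intro distr_lborel_orthogonal_transformation_wellorder)
      (simp add: orthogonal_transformation_def linear_compose inner_\<Phi> inner_\<Psi>)
  moreover have "G = \<Psi> \<circ> (\<Phi> \<circ> G \<circ> \<Psi>) \<circ> \<Phi>"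
    by (simp add: fun_eq_iff \<Phi>\<Psi>)
  moreover have "distr lborel borel (\<Psi> \<circ> (\<Phi> \<circ> G \<circ> \<Psi>) \<circ> \<Phi>)
      = distr (distr (distr lborel borel \<Phi>) borel (\<Phi> \<circ> G \<circ> \<Psi>)) borel \<Psi>"
    using G lin by (simp add: distr_distr comp_assoc borel_measurable_linear linear_compose
        orthogonal_transformation_linear)
  ultimately show ?thesis
    by simp
qed

section \<open>Reflection in the perpendicular bisector\<close>

definition reflect_along :: "'a::real_inner \<Rightarrow> 'a \<Rightarrow> 'a" where
  "reflect_along u v = v - (2 * (v \<bullet> u) / (u \<bullet> u)) *\<^sub>R u"

lemma reflect_along_reflect_along [simp]: "reflect_along u (reflect_along u v) = v"
  by (cases "u = 0") (simp_all add: reflect_along_def inner_diff_left scaleR_diff_left)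

lemma reflect_along_eq_self: "v \<bullet> u = 0 \<Longrightarrow> reflect_along u v = v"
  by (simp add: reflect_along_def)

lemma orthogonal_transformation_reflect_along: "orthogonal_transformation (reflect_along u)"
  unfolding orthogonal_transformation_def
proof (intro conjI allI)
  show "linear (reflect_along u)"
    by (rule linearI) (simp_all add: reflect_along_def inner_add_left add_divide_distrib algebra_simps)
  show "reflect_along u v \<bullet> reflect_along u w = v \<bullet> w" for v w
    by (cases "u = 0")
      (simp_all add: reflect_along_def inner_diff_left inner_diff_right field_simps inner_commute)
qed

lemma midpoint_eq_plus_half: "midpoint a c = c + (1/2) *\<^sub>R (a - c)"
proof -
  have "c + (1/2) *\<^sub>R (a - c) = (1/2) *\<^sub>R (c + c) + (1/2) *\<^sub>R (a - c)"
    by simp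
  also have "\<dots> = (1/2) *\<^sub>R (a + c)"
    by (simp only: scaleR_add_right[symmetric]) (simp add: algebra_simps)
  finally show ?thesis
    by (simp add: midpoint_def)
qed

definition bisector_reflect :: "'a::real_inner \<Rightarrow> 'a \<Rightarrow> 'a \<Rightarrow> 'a" where
  "bisector_reflect a c z = midpoint a c + reflect_along (a - c) (z - midpoint a c)"

lemma bisector_reflect_bisector_reflect [simp]:
  "bisector_reflect a c (bisector_reflect a c z) = z"
  by (simp add: bisector_reflect_def)

lemma bisector_reflect_minus_left: "bisector_reflect a c z - a = reflect_along (a - c) (z - c)"
proof (cases "a = c")
  case False
  let ?u = "a - c" and ?v = "z - midpoint a c"
  have "z - c = ?v + (1/2) *\<^sub>R ?u"
    by (simp add: midpoint_eq_plus_half)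
  then have "(z - c) \<bullet> ?u = ?v \<bullet> ?u + (1/2) * (?u \<bullet> ?u)"
    by (simp only: inner_add_left inner_scaleR_left)
  then have "2 * ((z - c) \<bullet> ?u) / (?u \<bullet> ?u) = 2 * (?v \<bullet> ?u) / (?u \<bullet> ?u) + 1"
    using False by (simp add: field_simps)
  then show ?thesis
    unfolding bisector_reflect_def reflect_along_def midpoint_eq_plus_half
    by (simp add: algebra_simps)
qed (simp add: bisector_reflect_def reflect_along_def)

lemma norm_bisector_reflect_minus_left: "norm (bisector_reflect a c z - a) = norm (z - c)"
  by (simp add: bisector_reflect_minus_left orthogonal_transformation_norm
      orthogonal_transformation_reflect_along)

lemma norm_bisector_reflect_minus_right: "norm (bisector_reflect a c z - c) = norm (z - a)"
  by (metis norm_bisector_reflect_minus_left bisector_reflect_bisector_reflect)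

lemma norm_diff_power2_eq_inner_midpoint:
  "(norm (z - c))\<^sup>2 - (norm (z - a))\<^sup>2 = 2 * ((z - midpoint a c) \<bullet> (a - c))"
proof -
  define u v where "u = a - c" and "v = z - midpoint a c"
  have zc: "z - c = v + (1/2) *\<^sub>R u"
    by (simp add: u_def v_def midpoint_eq_plus_half)
  have "z - a = (z - c) - u"
    by (simp add: u_def)
  also have "\<dots> = v - (1/2) *\<^sub>R u"
    using scaleR_half_double[of u] unfolding zc scaleR_add_right by (simp add: algebra_simps)
  finally show ?thesis
    unfolding power2_norm_eq_inner zc u_def[symmetric] v_def[symmetric]
    by (simp add: inner_simps inner_commute)
qed

lemma closer_iff_inner_midpoint:
  "norm (z - a) < norm (z - c) \<longleftrightarrow> 0 < (z - midpoint a c) \<bullet> (a - c)"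
proof -
  have "norm (z - a) < norm (z - c) \<longleftrightarrow> (norm (z - a))\<^sup>2 < (norm (z - c))\<^sup>2"
    by (simp add: norm_lt power2_norm_eq_inner)
  then show ?thesis
    using norm_diff_power2_eq_inner_midpoint[of z c a] by linarith
qed

lemma bisector_reflect_eq_self:
  assumes "norm (z - a) = norm (z - c)"
  shows "bisector_reflect a c z = z"
proof -
  have "(z - midpoint a c) \<bullet> (a - c) = 0"
    using norm_diff_power2_eq_inner_midpoint[of z c a] assms by simp
  then show ?thesis
    by (simp add: bisector_reflect_def reflect_along_eq_self)
qed

lemma norm_bisector_reflect_le:
  assumes "norm c \<le> norm a" and closer: "norm (z - a) < norm (z - c)"
  shows "norm (bisector_reflect a c z) \<le> norm z"
proof -
  define u m where "u = a - c" and "m = midpoint a c"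
  define t where "t = 2 * ((z - m) \<bullet> u) / (u \<bullet> u)"
  have "0 < (z - m) \<bullet> u"
    using closer closer_iff_inner_midpoint unfolding u_def m_def by blast
  then have "u \<noteq> 0" and "0 \<le> t"
    by (auto simp: t_def)
  then have t_uu: "t * (u \<bullet> u) = 2 * ((z - m) \<bullet> u)"
    by (simp add: t_def)
  have "0 \<le> m \<bullet> u" \<comment> \<open>\<open>m \<bullet> u = (\<parallel>a\<parallel>\<^sup>2 - \<parallel>c\<parallel>\<^sup>2) / 2\<close>\<close>
    using assms(1) by (simp add: u_def m_def midpoint_def norm_le inner_simps inner_commute)
  have "bisector_reflect a c z = z - t *\<^sub>R u"
    by (simp add: bisector_reflect_def reflect_along_def t_def u_def m_def)
  then have "(norm (bisector_reflect a c z))\<^sup>2 = (norm (z - t *\<^sub>R u))\<^sup>2"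
    by simp
  also have "\<dots> = (norm z)\<^sup>2 - 2 * t * (z \<bullet> u) + t * (t * (u \<bullet> u))"
    unfolding power2_norm_eq_inner
    by (simp add: inner_diff_left inner_diff_right inner_commute algebra_simps)
  also have "\<dots> = (norm z)\<^sup>2 - 2 * t * (m \<bullet> u)"
    unfolding t_uu by (simp add: inner_diff_left algebra_simps)
  also have "\<dots> \<le> (norm z)\<^sup>2"
    using \<open>0 \<le> t\<close> \<open>0 \<le> m \<bullet> u\<close> by simp
  finally show ?thesis
    by (simp add: power2_le_iff_abs_le)
qed

lemma bisector_reflect_eq_comp:
  "bisector_reflect a c = (+) (midpoint a c) \<circ> reflect_along (a - c) \<circ> (+) (- midpoint a c)"
  by (simp add: fun_eq_iff bisector_reflect_def)

lemma borel_measurable_reflect_along: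
  "reflect_along u \<in> borel_measurable (borel :: 'a::euclidean_space measure)"
  by (intro borel_measurable_linear orthogonal_transformation_linear
      orthogonal_transformation_reflect_along)

lemma borel_measurable_bisector_reflect:
  "bisector_reflect a c \<in> borel_measurable (borel :: 'a::euclidean_space measure)"
  unfolding bisector_reflect_def
  using measurable_compose[OF _ borel_measurable_reflect_along, of "\<lambda>z. z - midpoint a c"]
  by measurable

lemma distr_lborel_bisector_reflect:
  "distr lborel borel (bisector_reflect a c) = (lborel :: (real^'n::finite) measure)"
proof -
  have "distr lborel borel (bisector_reflect a c)
      = distr (distr (distr lborel borel ((+) (- midpoint a c))) borel (reflect_along (a - c)))
          borel ((+) (midpoint a c))"
    unfolding bisector_reflect_eq_comp
    using borel_measurable_reflect_along[of "a - c"] by (simp add: distr_distr comp_assoc)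
  then show ?thesis
    by (simp add: lborel_distr_plus distr_lborel_orthogonal_transformation
        orthogonal_transformation_reflect_along)
qed

lemma integral_bisector_reflect:
  fixes g :: "real^'n::finite \<Rightarrow> real"
  assumes "g \<in> borel_measurable borel"
  shows "(\<integral>z. g (bisector_reflect a c z) \<partial>lborel) = (\<integral>z. g z \<partial>lborel)"
  using integral_distr[of "bisector_reflect a c" lborel borel g] assms
  by (simp add: borel_measurable_bisector_reflect distr_lborel_bisector_reflect)

lemma integrable_bisector_reflect:
  fixes g :: "real^'n::finite \<Rightarrow> real"
  assumes "g \<in> borel_measurable borel" "integrable lborel g"
  shows "integrable lborel (\<lambda>z. g (bisector_reflect a c z))"
  using integrable_distr_eq[of "bisector_reflect a c" lborel borel g] assms
  by (simp add: borel_measurable_bisector_reflect distr_lborel_bisector_reflect)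

section \<open>Polarization\<close>

definition polarize :: "'a::real_inner \<Rightarrow> 'a \<Rightarrow> ('a \<Rightarrow> real) \<Rightarrow> 'a \<Rightarrow> real" where
  "polarize a c f z =
    (if norm (z - a) < norm (z - c) then max (f z) (f (bisector_reflect a c z))
     else min (f z) (f (bisector_reflect a c z)))"

lemma polarize_bounded:
  "(\<And>z. 0 \<le> f z \<and> f z \<le> 1) \<Longrightarrow> 0 \<le> polarize a c f z \<and> polarize a c f z \<le> 1"
  by (auto simp: polarize_def max_def min_def)

lemma borel_measurable_polarize:
  fixes f :: "'a::euclidean_space \<Rightarrow> real"
  assumes "f \<in> borel_measurable borel"
  shows "polarize a c f \<in> borel_measurable borel"
  unfolding polarize_def
  using measurable_compose[OF borel_measurable_bisector_reflect assms] assms by measurable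

lemma polarize_comp_bisector_reflect:
  "polarize a c (\<lambda>z. f (bisector_reflect a c z)) = polarize a c f"
  by (simp add: fun_eq_iff polarize_def max.commute min.commute)

lemma max_min_rearrangement:
  fixes A B x y :: real
  assumes "A \<le> B"
  shows "A * max x y + B * min x y \<le> A * x + B * y"
proof (cases "x \<le> y")
  case True
  then have "0 \<le> (B - A) * (y - x)"
    using assms by simp
  then show ?thesis
    using True by (simp add: max_def min_def algebra_simps)
qed (simp add: max_def min_def)

lemma polarize_pair_le:
  assumes W_mono: "\<And>z. norm (z - a) < norm (z - c) \<Longrightarrow> W z \<le> W (bisector_reflect a c z)"
  shows "W z * polarize a c f z + W (bisector_reflect a c z) * polarize a c f (bisector_reflect a c z)
    \<le> W z * f z + W (bisector_reflect a c z) * f (bisector_reflect a c z)"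
proof -
  let ?R = "bisector_reflect a c"
  have closer: "W z * polarize a c f z + W (?R z) * polarize a c f (?R z)
      \<le> W z * f z + W (?R z) * f (?R z)" if "norm (z - a) < norm (z - c)" for z
  proof -
    have "\<not> norm (?R z - a) < norm (?R z - c)"
      using that by (simp add: norm_bisector_reflect_minus_left norm_bisector_reflect_minus_right)
    then have "polarize a c f z = max (f z) (f (?R z))" "polarize a c f (?R z) = min (f z) (f (?R z))"
      using that by (simp_all add: polarize_def min.commute)
    then show ?thesis
      using max_min_rearrangement[OF W_mono[OF that]] by simp
  qed
  consider "norm (z - a) < norm (z - c)" | "norm (z - c) < norm (z - a)" | "norm (z - a) = norm (z - c)"
    by linarith
  then show ?thesis
  proof cases
    case 2
    then have "norm (?R z - a) < norm (?R z - c)"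
      by (simp add: norm_bisector_reflect_minus_left norm_bisector_reflect_minus_right)
    from closer[OF this] show ?thesis
      by simp
  next
    case 3
    then show ?thesis
      by (simp add: polarize_def bisector_reflect_eq_self)
  qed (rule closer)
qed

lemma integrable_mult_unit_bounded:
  fixes W g :: "'a \<Rightarrow> real"
  assumes "integrable M W" "g \<in> borel_measurable M" "\<And>z. z \<in> space M \<Longrightarrow> 0 \<le> g z \<and> g z \<le> 1"
  shows "integrable M (\<lambda>z. W z * g z)"
proof (rule Bochner_Integration.integrable_bound[OF assms(1)])
  show "(\<lambda>z. W z * g z) \<in> borel_measurable M"
    using assms(1,2) by simp
  show "AE z in M. norm (W z * g z) \<le> norm (W z)"
    using assms(3) by (auto simp: abs_mult intro!: mult_left_le)
qed

lemma integral_add_bisector_reflect: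
  fixes g :: "real^'n::finite \<Rightarrow> real"
  assumes "g \<in> borel_measurable borel" "integrable lborel g"
  shows "(\<integral>z. g z + g (bisector_reflect a c z) \<partial>lborel) = 2 * (\<integral>z. g z \<partial>lborel)"
  using assms integrable_bisector_reflect[OF assms] by (simp add: integral_bisector_reflect)

lemma integral_polarize_le:
  fixes W f :: "real^'n::finite \<Rightarrow> real"
  assumes f: "f \<in> borel_measurable borel" "\<And>z. 0 \<le> f z \<and> f z \<le> 1"
    and W: "W \<in> borel_measurable borel" "integrable lborel W"
    and W_mono: "\<And>z. norm (z - a) < norm (z - c) \<Longrightarrow> W z \<le> W (bisector_reflect a c z)"
  shows "(\<integral>z. W z * polarize a c f z \<partial>lborel) \<le> (\<integral>z. W z * f z \<partial>lborel)"
proof -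
  let ?R = "bisector_reflect a c"
  let ?g = "\<lambda>z. W z * polarize a c f z" and ?h = "\<lambda>z. W z * f z"
  have g: "?g \<in> borel_measurable borel" "integrable lborel ?g"
    using W f borel_measurable_polarize[OF f(1)] polarize_bounded[of f a c, OF f(2)]
    by (auto intro!: integrable_mult_unit_bounded)
  have h: "?h \<in> borel_measurable borel" "integrable lborel ?h"
    using W f by (auto intro!: integrable_mult_unit_bounded)
  have "2 * (\<integral>z. ?g z \<partial>lborel) = (\<integral>z. ?g z + ?g (?R z) \<partial>lborel)"
    using integral_add_bisector_reflect[OF g] by simp
  also have "\<dots> \<le> (\<integral>z. ?h z + ?h (?R z) \<partial>lborel)"
    using g h integrable_bisector_reflect[OF g] integrable_bisector_reflect[OF h]
      polarize_pair_le[of a c W, OF W_mono]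
    by (intro integral_mono) auto
  also have "\<dots> = 2 * (\<integral>z. ?h z \<partial>lborel)"
    using integral_add_bisector_reflect[OF h] by simp
  finally show ?thesis
    by simp
qed

lemma integral_polarize_ge:
  fixes W f :: "real^'n::finite \<Rightarrow> real"
  assumes f: "f \<in> borel_measurable borel" "\<And>z. 0 \<le> f z \<and> f z \<le> 1"
    and W: "W \<in> borel_measurable borel" "integrable lborel W"
    and W_mono: "\<And>z. norm (z - a) < norm (z - c) \<Longrightarrow> W (bisector_reflect a c z) \<le> W z"
  shows "(\<integral>z. W (bisector_reflect a c z) * f z \<partial>lborel) \<le> (\<integral>z. W z * polarize a c f z \<partial>lborel)"
proof -
  let ?R = "bisector_reflect a c"
  have fR: "(\<lambda>z. f (?R z)) \<in> borel_measurable borel"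
    using measurable_compose[OF borel_measurable_bisector_reflect f(1)] by simp
  have "(\<integral>z. W (?R z) * f z \<partial>lborel) = (\<integral>z. W z * f (?R z) \<partial>lborel)"
    using integral_bisector_reflect[of "\<lambda>z. W z * f (?R z)" a c] W(1) fR by simp
  also have "\<dots> = - (\<integral>z. - W z * f (?R z) \<partial>lborel)"
    by simp
  also have "\<dots> \<le> - (\<integral>z. - W z * polarize a c (\<lambda>z. f (?R z)) z \<partial>lborel)"
    using integral_polarize_le[OF fR _ _ _, of "\<lambda>z. - W z"] f(2) W W_mono by simp
  also have "\<dots> = (\<integral>z. W z * polarize a c f z \<partial>lborel)"
    by (simp add: polarize_comp_bisector_reflect)
  finally show ?thesis .
qed

section \<open>Gaussian likelihoods\<close>

lemma borel_measurable_awgn_lik [measurable]: "awgn_lik \<sigma> x \<in> borel_measurable borel"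
  unfolding awgn_lik_def[abs_def] by measurable

lemma awgn_lik_nonneg: "0 \<le> awgn_lik \<sigma> x y"
  unfolding awgn_lik_def by (simp add: prod_nonneg)

lemma awgn_lik_eq:
  fixes x y :: "real^'n::finite"
  shows "awgn_lik \<sigma> x y = (1 / sqrt (2 * pi * \<sigma>\<^sup>2)) ^ CARD('n) * exp (- (norm (y - x))\<^sup>2 / (2 * \<sigma>\<^sup>2))"
proof -
  have "(norm (y - x))\<^sup>2 = (\<Sum>i\<in>UNIV. (y $ i - x $ i)\<^sup>2)"
    unfolding power2_norm_eq_inner inner_vec_def by (simp add: power2_eq_square)
  then have "exp (- (norm (y - x))\<^sup>2 / (2 * \<sigma>\<^sup>2)) = (\<Prod>i\<in>UNIV. exp (- (y $ i - x $ i)\<^sup>2 / (2 * \<sigma>\<^sup>2)))"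
    by (simp add: exp_sum[symmetric] sum_divide_distrib sum_negf)
  then show ?thesis
    by (simp add: awgn_lik_def normal_density_def prod_dividef power_one_over)
qed

lemma awgn_lik_antimono:
  fixes x y x' y' :: "real^'n::finite"
  assumes "norm (y - x) \<le> norm (y' - x')"
  shows "awgn_lik \<sigma> x' y' \<le> awgn_lik \<sigma> x y"
proof -
  have "(norm (y - x))\<^sup>2 \<le> (norm (y' - x'))\<^sup>2"
    using assms by (simp add: power_mono)
  then have "- (norm (y' - x'))\<^sup>2 / (2 * \<sigma>\<^sup>2) \<le> - (norm (y - x))\<^sup>2 / (2 * \<sigma>\<^sup>2)"
    by (intro divide_right_mono) auto
  then show ?thesis
    unfolding awgn_lik_eq by (intro mult_left_mono) auto
qed

lemma nn_integral_awgn_lik: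
  fixes x :: "real^'n::finite"
  assumes "0 < \<sigma>"
  shows "(\<integral>\<^sup>+y. ennreal (awgn_lik \<sigma> x y) \<partial>lborel) = 1"
proof -
  have "(\<lambda>y. ennreal (awgn_lik \<sigma> x y))
      = (\<lambda>y. \<Prod>b\<in>Basis. ennreal (normal_density (x \<bullet> b) \<sigma> (y \<bullet> b)))"
    by (simp add: fun_eq_iff awgn_lik_def Basis_vec_def axis_eq_axis prod.UNION_disjoint
        inner_axis prod_ennreal)
  then show ?thesis
    using nn_integral_lborel_prod[of "\<lambda>b t. ennreal (normal_density (x \<bullet> b) \<sigma> t)"] assms
    by (simp add: nn_integral_eq_integral)
qed

lemma integrable_awgn_lik: "0 < \<sigma> \<Longrightarrow> integrable lborel (awgn_lik \<sigma> x)"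
  by (rule integrableI_nonneg) (auto simp: awgn_lik_nonneg nn_integral_awgn_lik)

lemma integral_awgn_lik:
  assumes "0 < \<sigma>"
  shows "integral\<^sup>L lborel (awgn_lik \<sigma> x) = 1"
  using nn_integral_awgn_lik[OF assms, of x] integrable_awgn_lik[OF assms]
  by (subst (asm) nn_integral_eq_integral) (auto simp: integrable_awgn_lik awgn_lik_nonneg)

lemma prob_space_awgn_lik: "0 < \<sigma> \<Longrightarrow> prob_space (density lborel (\<lambda>y. ennreal (awgn_lik \<sigma> x y)))"
  by (rule prob_spaceI) (simp add: emeasure_density nn_integral_awgn_lik)

lemma gauss_vec_eq_density_awgn_lik: "gauss_vec \<mu> \<sigma> = density lborel (\<lambda>y. ennreal (awgn_lik \<sigma> (\<chi> i. \<mu>) y))"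
  by (simp add: gauss_vec_def gauss_vec_density_def awgn_lik_def)

section \<open>The converse bound\<close>

definition ml_region :: "real \<Rightarrow> nat \<Rightarrow> (nat \<Rightarrow> real^'n) \<Rightarrow> nat \<Rightarrow> (real^'n) set" where
  "ml_region \<sigma> M c i = {y. ml_decode \<sigma> M c y = i}"

lemma sets_ml_region [measurable]: "ml_region \<sigma> M c i \<in> sets borel"
proof -
  have "ml_decode \<sigma> M c \<in> measurable borel (count_space UNIV)"
    unfolding ml_decode_def[abs_def] by measurable
  then show ?thesis
    unfolding ml_region_def by measurable
qed

lemma sum_indicator_ml_region_le: "(\<Sum>i<M. indicator (ml_region \<sigma> M c i) y) \<le> (1::real)"
proof -
  have "(\<Sum>i<M. indicator (ml_region \<sigma> M c i) y) = (\<Sum>i<M. if ml_decode \<sigma> M c y = i then 1 else 0 :: real)"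
    by (intro sum.cong) (auto simp: ml_region_def)
  also have "\<dots> \<le> 1"
    by (simp add: sum.delta)
  finally show ?thesis .
qed

lemma Pe_eq_one_minus_success:
  assumes "0 < \<sigma>" "1 \<le> M"
  shows "Pe \<sigma> M c
    = 1 - (\<Sum>i<M. \<integral>y. awgn_lik \<sigma> (c i) y * indicator (ml_region \<sigma> M c i) y \<partial>lborel) / M"
proof -
  have error: "measure (density lborel (\<lambda>y. ennreal (awgn_lik \<sigma> (c i) y))) {y. ml_decode \<sigma> M c y \<noteq> i}
      = 1 - (\<integral>y. awgn_lik \<sigma> (c i) y * indicator (ml_region \<sigma> M c i) y \<partial>lborel)" for i
  proof -
    let ?P = "density lborel (\<lambda>y. ennreal (awgn_lik \<sigma> (c i) y))"
    interpret prob_space ?P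
      using assms(1) by (rule prob_space_awgn_lik)
    have "{y. ml_decode \<sigma> M c y \<noteq> i} = space ?P - ml_region \<sigma> M c i"
      by (auto simp: ml_region_def)
    moreover have "ml_region \<sigma> M c i \<in> events"
      by simp
    ultimately have "measure ?P {y. ml_decode \<sigma> M c y \<noteq> i} = 1 - measure ?P (ml_region \<sigma> M c i)"
      by (simp only: prob_compl)
    also have "measure ?P (ml_region \<sigma> M c i) = integral\<^sup>L ?P (indicator (ml_region \<sigma> M c i))"
      by simp
    also have "\<dots> = (\<integral>y. awgn_lik \<sigma> (c i) y * indicator (ml_region \<sigma> M c i) y \<partial>lborel)"
      by (subst integral_density) (auto simp: awgn_lik_nonneg)
    finally show ?thesis .
  qed
  show ?thesis
    unfolding Pe_def error using assms(2) by (simp add: sum_subtractf field_simps)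
qed

definition polarized_test :: "real \<Rightarrow> nat \<Rightarrow> (nat \<Rightarrow> real^'n) \<Rightarrow> real^'n \<Rightarrow> real^'n \<Rightarrow> real" where
  "polarized_test \<sigma> M c a z = (\<Sum>i<M. polarize a (c i) (indicator (ml_region \<sigma> M c i)) z) / M"

lemma polarize_ml_region_bounded:
  "0 \<le> polarize a (c i) (indicator (ml_region \<sigma> M c i)) z
    \<and> polarize a (c i) (indicator (ml_region \<sigma> M c i)) z \<le> 1"
  by (rule polarize_bounded) (simp add: indicator_def)

lemma borel_measurable_polarized_test: "polarized_test \<sigma> M c a \<in> borel_measurable borel"
  unfolding polarized_test_def[abs_def]
  using borel_measurable_polarize[OF borel_measurable_indicator[OF sets_ml_region]] by measurable

lemma polarized_test_bounded: "0 \<le> polarized_test \<sigma> M c a z \<and> polarized_test \<sigma> M c a z \<le> 1"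
proof -
  have "(\<Sum>i<M. polarize a (c i) (indicator (ml_region \<sigma> M c i)) z) \<le> (\<Sum>i<M. 1)"
    using polarize_ml_region_bounded by (intro sum_mono) blast
  then show ?thesis
    unfolding polarized_test_def
    by (auto simp: divide_le_eq_1
        intro!: sum_nonneg divide_nonneg_nonneg polarize_ml_region_bounded[THEN conjunct1])
qed

lemma integral_awgn_polarized_test:
  assumes "0 < s"
  shows "integral\<^sup>L (density lborel (\<lambda>y. ennreal (awgn_lik s x y))) (polarized_test \<sigma> M c a)
    = (\<Sum>i<M. \<integral>z. awgn_lik s x z * polarize a (c i) (indicator (ml_region \<sigma> M c i)) z \<partial>lborel) / M"
proof -
  have integrable:
    "integrable lborel (\<lambda>z. awgn_lik s x z * polarize a (c i) (indicator (ml_region \<sigma> M c i)) z)"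
    for i
    using integrable_awgn_lik[OF assms] polarize_ml_region_bounded[of a c i \<sigma> M]
      borel_measurable_polarize[OF borel_measurable_indicator[OF sets_ml_region]]
    by (intro integrable_mult_unit_bounded) auto
  have "integral\<^sup>L (density lborel (\<lambda>y. ennreal (awgn_lik s x y))) (polarized_test \<sigma> M c a)
      = (\<integral>z. awgn_lik s x z * polarized_test \<sigma> M c a z \<partial>lborel)"
    using borel_measurable_polarized_test by (subst integral_density) (auto simp: awgn_lik_nonneg)
  also have "\<dots> = (\<integral>z. (\<Sum>i<M. awgn_lik s x z * polarize a (c i) (indicator (ml_region \<sigma> M c i)) z) / M
      \<partial>lborel)"
    by (simp add: polarized_test_def sum_distrib_left)
  finally show ?thesis
    using integrable by simp
qed

lemma integral_polarized_test_le:
  fixes c :: "nat \<Rightarrow> real^'n::finite"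
  assumes "0 < \<theta>" "1 \<le> M" and power: "\<And>i. i < M \<Longrightarrow> norm (c i) \<le> norm a"
  shows "integral\<^sup>L (density lborel (\<lambda>y. ennreal (awgn_lik \<theta> 0 y))) (polarized_test \<sigma> M c a) \<le> 1 / M"
proof -
  let ?q = "awgn_lik \<theta> (0::real^'n)" and ?f = "\<lambda>i. indicator (ml_region \<sigma> M c i) :: real^'n \<Rightarrow> real"
  have integrable: "integrable lborel (\<lambda>z. ?q z * ?f i z)" for i
    using integrable_awgn_lik[OF assms(1)] by (intro integrable_mult_unit_bounded) auto
  have "(\<Sum>i<M. \<integral>z. ?q z * polarize a (c i) (?f i) z \<partial>lborel) \<le> (\<Sum>i<M. \<integral>z. ?q z * ?f i z \<partial>lborel)"
  proof (intro sum_mono integral_polarize_le)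
    fix i z
    assume "i \<in> {..<M}" "norm (z - a) < norm (z - c i)"
    then have "norm (bisector_reflect a (c i) z) \<le> norm z"
      using power norm_bisector_reflect_le by auto
    then show "?q z \<le> ?q (bisector_reflect a (c i) z)"
      by (intro awgn_lik_antimono) simp
  qed (use integrable_awgn_lik[OF assms(1)] in auto)
  also have "\<dots> = (\<integral>z. (\<Sum>i<M. ?q z * ?f i z) \<partial>lborel)"
    by (rule Bochner_Integration.integral_sum[where I="{..<M}" and f="\<lambda>i z. ?q z * ?f i z", symmetric])
      (rule integrable)
  also have "\<dots> = (\<integral>z. ?q z * (\<Sum>i<M. ?f i z) \<partial>lborel)"
    by (simp only: sum_distrib_left)
  also have "\<dots> \<le> (\<integral>z. ?q z \<partial>lborel)"
  proof (intro integral_mono)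
    show "integrable lborel (\<lambda>z. ?q z * (\<Sum>i<M. ?f i z))"
      using integrable_awgn_lik[OF assms(1)] sum_indicator_ml_region_le[of \<sigma> M c]
      by (intro integrable_mult_unit_bounded) (auto intro: sum_nonneg)
    show "?q z * (\<Sum>i<M. ?f i z) \<le> ?q z" for z
      by (intro mult_left_le sum_indicator_ml_region_le awgn_lik_nonneg)
  qed (rule integrable_awgn_lik[OF assms(1)])
  also have "\<dots> = 1"
    using assms(1) by (rule integral_awgn_lik)
  finally show ?thesis
    using assms(2) by (simp add: integral_awgn_polarized_test[OF assms(1)] divide_right_mono)
qed

lemma Pe_ge_one_minus_integral_polarized_test:
  fixes c :: "nat \<Rightarrow> real^'n::finite"
  assumes "0 < \<sigma>" "1 \<le> M"
  shows "1 - integral\<^sup>L (density lborel (\<lambda>y. ennreal (awgn_lik \<sigma> a y))) (polarized_test \<sigma> M c a)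
    \<le> Pe \<sigma> M c"
proof -
  let ?p = "awgn_lik \<sigma> a" and ?f = "\<lambda>i. indicator (ml_region \<sigma> M c i) :: real^'n \<Rightarrow> real"
  have "(\<integral>z. awgn_lik \<sigma> (c i) z * ?f i z \<partial>lborel) \<le> (\<integral>z. ?p z * polarize a (c i) (?f i) z \<partial>lborel)" for i
  proof -
    have "?p (bisector_reflect a (c i) z) = awgn_lik \<sigma> (c i) z" for z
      by (simp add: awgn_lik_eq norm_bisector_reflect_minus_left)
    moreover have "(\<integral>z. ?p (bisector_reflect a (c i) z) * ?f i z \<partial>lborel)
        \<le> (\<integral>z. ?p z * polarize a (c i) (?f i) z \<partial>lborel)"
    proof (rule integral_polarize_ge)
      fix z
      assume "norm (z - a) < norm (z - c i)"
      then show "?p (bisector_reflect a (c i) z) \<le> ?p z"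
        by (intro awgn_lik_antimono) (simp add: norm_bisector_reflect_minus_left)
    qed (use integrable_awgn_lik[OF assms(1)] in auto)
    ultimately show ?thesis
      by simp
  qed
  then have "(\<Sum>i<M. \<integral>z. awgn_lik \<sigma> (c i) z * ?f i z \<partial>lborel) / M
      \<le> integral\<^sup>L (density lborel (\<lambda>y. ennreal (?p y))) (polarized_test \<sigma> M c a)"
    unfolding integral_awgn_polarized_test[OF assms(1)]
    by (intro divide_right_mono sum_mono) auto
  then show ?thesis
    unfolding Pe_eq_one_minus_success[OF assms] by simp
qed

lemma alpha_beta_le:
  assumes "prob_space A" and T: "T \<in> borel_measurable A" "sets B = sets A"
    "\<And>z. z \<in> space A \<Longrightarrow> 0 \<le> T z \<and> T z \<le> 1" "integral\<^sup>L B T \<le> \<beta>"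
  shows "alpha_beta \<beta> A B \<le> 1 - integral\<^sup>L A T"
  unfolding alpha_beta_def
proof (rule cInf_lower)
  show "1 - integral\<^sup>L A T \<in> {1 - integral\<^sup>L A T |T. T \<in> borel_measurable A \<and> sets B = sets A
      \<and> (\<forall>z\<in>space A. 0 \<le> T z \<and> T z \<le> 1) \<and> integral\<^sup>L B T \<le> \<beta>}"
    using T by blast
  interpret prob_space A
    by fact
  have "integral\<^sup>L A t \<le> 1"
    if "t \<in> borel_measurable A" "\<forall>z\<in>space A. 0 \<le> t z \<and> t z \<le> 1" for t :: "_ \<Rightarrow> real"
  proof -
    have "integrable A t"
      by (rule integrable_const_bound[where B=1]) (use that in auto)
    then have "integral\<^sup>L A t \<le> integral\<^sup>L A (\<lambda>_. 1)"
      using that by (intro integral_mono) auto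
    then show ?thesis
      by (simp add: prob_space)
  qed
  then show "bdd_below {1 - integral\<^sup>L A T |T. T \<in> borel_measurable A \<and> sets B = sets A
      \<and> (\<forall>z\<in>space A. 0 \<le> T z \<and> T z \<le> 1) \<and> integral\<^sup>L B T \<le> \<beta>}"
    by (intro bdd_belowI[of _ 0]) auto
qed

lemma alpha_beta_le_Pe:
  fixes c :: "nat \<Rightarrow> real^'n::finite" and a :: "real^'n"
  assumes "0 < \<sigma>" "0 < \<theta>" "1 \<le> M" and "\<And>i. i < M \<Longrightarrow> norm (c i) \<le> norm a"
  shows "alpha_beta (1 / real M) (density lborel (\<lambda>y. ennreal (awgn_lik \<sigma> a y)))
      (density lborel (\<lambda>y. ennreal (awgn_lik \<theta> 0 y))) \<le> Pe \<sigma> M c"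
proof -
  have "alpha_beta (1 / real M) (density lborel (\<lambda>y. ennreal (awgn_lik \<sigma> a y)))
      (density lborel (\<lambda>y. ennreal (awgn_lik \<theta> 0 y)))
    \<le> 1 - integral\<^sup>L (density lborel (\<lambda>y. ennreal (awgn_lik \<sigma> a y))) (polarized_test \<sigma> M c a)"
    using prob_space_awgn_lik[OF assms(1)] borel_measurable_polarized_test
      polarized_test_bounded[of \<sigma> M c a] integral_polarized_test_le[OF assms(2-4)]
    by (intro alpha_beta_le) auto
  also have "\<dots> \<le> Pe \<sigma> M c"
    using assms(1,3) by (rule Pe_ge_one_minus_integral_polarized_test)
  finally show ?thesis .
qed

theorem theorem3:
  fixes \<theta> \<sigma> \<Upsilon> :: real and M :: nat
  assumes "\<theta> \<ge> \<sigma>" and "\<sigma> > 0" and "M \<ge> 1" and "\<Upsilon> > 0"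
  shows "eps_m_star TYPE('n::finite) \<sigma> M \<Upsilon>
           \<ge> alpha_beta (1 / real M)
                (gauss_vec (sqrt \<Upsilon>) \<sigma> :: (real ^ 'n) measure) (gauss_vec 0 \<theta>)"
proof -
  \<comment> \<open>The hypothesis \<open>\<sigma> \<le> \<theta>\<close> is only needed to get \<open>0 < \<theta>\<close>.\<close>
  define a :: "real^'n" where "a = (\<chi> i. sqrt \<Upsilon>)"
  have "(norm a)\<^sup>2 = real CARD('n) * \<Upsilon>"
    using assms(4) by (simp add: a_def power2_norm_eq_inner inner_vec_def power2_eq_square[symmetric])
  then have power: "norm (c i) \<le> norm a"
    if "(norm (c i))\<^sup>2 \<le> real CARD('n) * \<Upsilon>" for c :: "nat \<Rightarrow> real^'n" and i
    using that by (metis norm_ge_zero power2_le_imp_le)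
  have gauss: "gauss_vec (sqrt \<Upsilon>) \<sigma> = density lborel (\<lambda>y. ennreal (awgn_lik \<sigma> a y))"
    "gauss_vec 0 \<theta> = density lborel (\<lambda>y. ennreal (awgn_lik \<theta> (0::real^'n) y))"
    by (simp_all add: gauss_vec_eq_density_awgn_lik a_def zero_vec_def)
  show ?thesis
    unfolding eps_m_star_def gauss
  proof (rule cInf_greatest)
    show "{Pe \<sigma> M c |c :: nat \<Rightarrow> real^'n. \<forall>i<M. (norm (c i))\<^sup>2 \<le> real CARD('n) * \<Upsilon>} \<noteq> {}"
      using assms(4) by (auto intro!: exI[of _ "Pe \<sigma> M (\<lambda>_. 0)"] exI[of _ "\<lambda>_. 0"])
  qed (use assms power in \<open>auto intro!: alpha_beta_le_Pe\<close>)
qed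

end
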